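(* Let $n\in\mathbb{N}$ and $p^*\in[1,\infty]$. If $\mathcal{P}=\{x_1,\dots,x_n\}$ is a collection of $n$ points in $[0,1]$ (repetitions allowed) whose $L_{p^*}$-discrepancy is minimal among all collections of $n$ points in $[0,1]$, then for each $j=1,\dots,n$ the interval $[\frac{j-1}{n},\frac jn)$ contains exactly one point of $\mathcal{P}$.
   Context: For $\mathcal{P}=\{x_1,\dots,x_n\}\subseteq[0,1]$, the local discrepancy is $\Delta_{\mathcal{P}}(t)=\frac1n\#\{j:x_j\in[0,t)\}-t$ for $t\in[0,1]$, and $L_{p^*}(\mathcal{P})=\|\Delta_{\mathcal{P}}\|_{L_{p^*}([0,1])}$. *)

theory Defs
  imports "HOL-Probability.Probability"
begin

definition local_disc :: "nat \<Rightarrow> (nat \<Rightarrow> real) \<Rightarrow> real \<Rightarrow> real" where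
  "local_disc n x t = real (card {j\<in>{..<n}. x j \<in> {0..<t}}) / real n - t"

definition Lp_disc :: "ereal \<Rightarrow> nat \<Rightarrow> (nat \<Rightarrow> real) \<Rightarrow> real" where
  "Lp_disc p n x =
     (if p = \<infinity> then real_of_ereal (esssup (lebesgue_on {0..1}) (\<lambda>t. ereal \<bar>local_disc n x t\<bar>))
      else (LINT t:{0..1}|lborel. \<bar>local_disc n x t\<bar> powr (real_of_ereal p)) powr (1 / real_of_ereal p))"

end

theory Submission
  imports Defs
begin

text \<open>Let \<open>k(t)\<close> be the number of points in \<open>[0,t)\<close>, so that \<open>\<Delta>(t) = (k(t) - n t)/n\<close>.
  The centred grid \<open>(2i+1)/(2n)\<close> makes \<open>k(t)\<close> a nearest integer to \<open>n t\<close>, hence its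
  discrepancy is pointwise minimal and at most \<open>1/(2n)\<close>. If an optimal set had
  \<open>k(j/n) \<noteq> j\<close>, then, since \<open>k\<close> is constant just left of \<open>j/n\<close>, its discrepancy would be
  at least \<open>3/(4n)\<close> on an interval, and the grid would have strictly smaller
  \<open>L\<^sub>p\<close>-discrepancy. So \<open>k(j/n) = j\<close> for all \<open>j\<close>, and each cell \<open>[(j-1)/n, j/n)\<close>
  contains \<open>k(j/n) - k((j-1)/n) = 1\<close> point.\<close>

lemma set_integral_strict_mono_on_interval:
  fixes f g :: "real \<Rightarrow> real"
  assumes f: "set_integrable lborel S f" and g: "set_integrable lborel S g"
    and le: "\<forall>t\<in>S. f t \<le> g t"
    and I: "{l<..<u} \<subseteq> S" "l < u" and d: "d > 0"
    and gap: "\<forall>t\<in>{l<..<u}. f t + d \<le> g t"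
  shows "(LINT t:S|lborel. f t) < (LINT t:S|lborel. g t)"
proof -
  let ?I = "{l<..<u}"
  have restrict_I: "(\<lambda>t. indicator S t *\<^sub>R indicator ?I t) = (indicator ?I :: real \<Rightarrow> real)"
    using I by (auto simp: indicator_def fun_eq_iff)
  have I_integrable: "set_integrable lborel S (indicator ?I :: real \<Rightarrow> real)"
    unfolding set_integrable_def restrict_I using I by (intro integrable_real_indicator) auto
  have I_integral: "(LINT t:S|lborel. (indicator ?I t :: real)) = u - l"
    unfolding set_lebesgue_integral_def restrict_I using I by simp
  have sum_integrable: "set_integrable lborel S (\<lambda>t. f t + d * indicator ?I t)"
    using f I_integrable by (intro set_integral_add) auto
  have "(LINT t:S|lborel. f t) + d * (u - l) = (LINT t:S|lborel. f t + d * indicator ?I t)"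
    using f I_integrable by (simp add: I_integral)
  also have "\<dots> \<le> (LINT t:S|lborel. g t)"
    using sum_integrable g le gap by (intro set_integral_mono) (auto simp: indicator_def)
  finally show ?thesis using mult_pos_pos[OF d, of "u - l"] I by linarith
qed

lemma esssup_lebesgue_on_ge_on_interval:
  fixes l u :: real
  assumes S: "S \<in> sets lebesgue" and I: "{l<..<u} \<subseteq> S" "l < u"
    and ge: "\<forall>t\<in>{l<..<u}. c \<le> f t"
  shows "c \<le> esssup (lebesgue_on S) f"
proof (rule ccontr)
  let ?M = "lebesgue_on S"
  assume "\<not> c \<le> esssup ?M f"
  moreover have "AE t in ?M. f t \<le> esssup ?M f"
    by (rule esssup_AE)
  ultimately have "AE t in ?M. f t < c"
    by (auto elim: AE_mp)
  then have "AE t in ?M. t \<notin> {l<..<u}"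
    by eventually_elim (use ge in force)
  moreover have "{l<..<u} \<in> sets ?M"
    using I S by (auto simp: sets_restrict_space_iff intro: sets_completionI_sets)
  ultimately have "emeasure ?M {l<..<u} = 0"
    using AE_iff_null_sets by blast
  moreover have "emeasure ?M {l<..<u} = ennreal (u - l)"
    using I S by (subst emeasure_restrict_space) (auto simp: Int_absorb2)
  ultimately show False using I by simp
qed

lemma esssup_lebesgue_on_le:
  assumes "f \<in> borel_measurable (lebesgue_on S)" and "\<forall>t\<in>S. f t \<le> c"
  shows "esssup (lebesgue_on S) f \<le> c"
  using assms by (intro esssup_I) (auto intro: AE_I2 simp: space_restrict_space)

definition count_below :: "nat \<Rightarrow> (nat \<Rightarrow> real) \<Rightarrow> real \<Rightarrow> nat" where
  "count_below n x t = card {i\<in>{..<n}. x i \<in> {0..<t}}"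

lemma local_disc_eq_count_below:
  assumes "n > 0"
  shows "local_disc n x t = (real (count_below n x t) - real n * t) / real n"
  using assms unfolding local_disc_def count_below_def by (simp add: diff_divide_distrib)

lemma count_below_le: "count_below n x t \<le> n"
  unfolding count_below_def by (rule card_mono[of "{..<n}", simplified]) auto

lemma card_points_in_interval:
  assumes "0 \<le> a" "a \<le> b"
  shows "card {i\<in>{..<n}. x i \<in> {a..<b}} = count_below n x b - count_below n x a"
proof -
  have "{i\<in>{..<n}. x i \<in> {a..<b}} = {i\<in>{..<n}. x i \<in> {0..<b}} - {i\<in>{..<n}. x i \<in> {0..<a}}"
    using assms by auto
  moreover have "{i\<in>{..<n}. x i \<in> {0..<a}} \<subseteq> {i\<in>{..<n}. x i \<in> {0..<b}}"
    using assms by auto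
  ultimately show ?thesis
    unfolding count_below_def by (simp add: card_Diff_subset)
qed

lemma count_below_constant_left:
  assumes "a < u"
  shows "\<exists>l. a \<le> l \<and> l < u \<and> (\<forall>t\<in>{l<..u}. count_below n x t = count_below n x u)"
proof -
  define l where "l = Max (insert a {x i | i. i < n \<and> x i < u})"
  have fin: "finite {x i | i. i < n \<and> x i < u}" by simp
  have "a \<le> l" unfolding l_def using fin by simp
  moreover have "l < u" unfolding l_def using fin assms by auto
  moreover have "count_below n x t = count_below n x u" if t: "t \<in> {l<..u}" for t
  proof -
    have "x i < t \<longleftrightarrow> x i < u" if "i < n" for i
    proof
      assume "x i < u"
      then have "x i \<le> l" unfolding l_def using fin \<open>i < n\<close> by (intro Max_ge) auto
      then show "x i < t" using t by simp
    qed (use t in simp)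
    then have "{i\<in>{..<n}. x i \<in> {0..<t}} = {i\<in>{..<n}. x i \<in> {0..<u}}" by auto
    then show ?thesis unfolding count_below_def by simp
  qed
  ultimately show ?thesis by blast
qed

lemma abs_local_disc_le_1:
  assumes "t \<in> {0..1}"
  shows "\<bar>local_disc n x t\<bar> \<le> 1"
proof -
  have "0 \<le> real (count_below n x t) / real n" "real (count_below n x t) / real n \<le> 1"
    using count_below_le[of n x t] by (auto simp: divide_le_eq_1)
  with assms show ?thesis
    unfolding local_disc_def count_below_def[symmetric] atLeastAtMost_iff by arith
qed

lemma borel_measurable_local_disc: "local_disc n x \<in> borel_measurable borel"
proof -
  have "local_disc n x = (\<lambda>t. (\<Sum>i<n. if 0 \<le> x i \<and> x i < t then 1 else 0) / real n - t)"
    unfolding local_disc_def real_of_card by (subst sum.inter_filter[symmetric]) auto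
  also have "\<dots> \<in> borel_measurable borel" by measurable
  finally show ?thesis .
qed

lemma set_integrable_abs_local_disc_powr:
  assumes "r \<ge> 0"
  shows "set_integrable lborel {0..1} (\<lambda>t. \<bar>local_disc n x t\<bar> powr r)"
  unfolding set_integrable_def
proof (rule integrableI_bounded_set_indicator[where B = 1])
  show "(\<lambda>t. \<bar>local_disc n x t\<bar> powr r) \<in> borel_measurable lborel"
    using borel_measurable_local_disc[of n x] by measurable
  show "AE t in lborel. t \<in> {0..1} \<longrightarrow> norm (\<bar>local_disc n x t\<bar> powr r) \<le> 1"
    using abs_local_disc_le_1 assms by (auto intro!: AE_I2 powr_le1)
qed auto

lemma borel_measurable_lebesgue_on_abs_local_disc:
  "(\<lambda>t. ereal \<bar>local_disc n x t\<bar>) \<in> borel_measurable (lebesgue_on S)"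
proof -
  have "(\<lambda>t. ereal \<bar>local_disc n x t\<bar>) \<in> borel_measurable lborel"
    using borel_measurable_local_disc[of n x] by measurable
  then show ?thesis
    by (intro measurable_restrict_space1 measurable_completion)
qed

definition centered_grid :: "nat \<Rightarrow> nat \<Rightarrow> real" where
  "centered_grid n i = (2 * real i + 1) / (2 * real n)"

lemma centered_grid_in_unit_interval:
  assumes "i < n"
  shows "centered_grid n i \<in> {0..1}"
  using assms unfolding centered_grid_def by (auto simp: field_simps)

lemma count_below_centered_grid:
  assumes "n > 0" "t \<in> {0..1}"
  shows "\<bar>real (count_below n (centered_grid n) t) - real n * t\<bar> \<le> 1/2"
proof -
  define m where "m = nat \<lceil>real n * t - 1/2\<rceil>"
  have m_iff: "j < m \<longleftrightarrow> real j < real n * t - 1/2" for j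
    unfolding m_def by (meson linorder_not_less nat_ceiling_le_eq)
  have grid_iff: "centered_grid n j < t \<longleftrightarrow> real j < real n * t - 1/2" for j
    using assms unfolding centered_grid_def by (simp add: divide_less_eq algebra_simps) linarith
  have "real n * t \<le> real n" using assms by (simp add: mult_left_le)
  then have "j < m \<Longrightarrow> j < n" for j
    unfolding m_iff by linarith
  moreover have "0 \<le> centered_grid n j" for j
    unfolding centered_grid_def by simp
  ultimately have "{i\<in>{..<n}. centered_grid n i \<in> {0..<t}} = {..<m}"
    using m_iff grid_iff by auto
  then have count: "count_below n (centered_grid n) t = m"
    unfolding count_below_def by simp
  have "0 \<le> real n * t" using assms by simp
  then have "real m = real_of_int \<lceil>real n * t - 1/2\<rceil>"
    unfolding m_def by (simp add: of_nat_nat)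
  then show ?thesis
    unfolding count by linarith
qed

lemma abs_local_disc_centered_grid_le:
  assumes "n > 0" "t \<in> {0..1}"
  shows "\<bar>local_disc n (centered_grid n) t\<bar> \<le> 1 / (2 * real n)"
  using count_below_centered_grid[OF assms] assms
  by (simp add: local_disc_eq_count_below abs_divide divide_le_eq)

lemma abs_local_disc_centered_grid_minimal:
  assumes "n > 0" "t \<in> {0..1}"
  shows "\<bar>local_disc n (centered_grid n) t\<bar> \<le> \<bar>local_disc n y t\<bar>"
proof -
  let ?m = "count_below n (centered_grid n) t" and ?k = "count_below n y t"
  have "\<bar>real ?m - real n * t\<bar> \<le> \<bar>real ?k - real n * t\<bar>"
  proof (cases "?k = ?m")
    case False
    then have "real ?k \<ge> real ?m + 1 \<or> real ?k + 1 \<le> real ?m" by linarith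
    then show ?thesis using count_below_centered_grid[OF assms] by linarith
  qed simp
  then show ?thesis
    using assms by (simp add: local_disc_eq_count_below abs_divide divide_right_mono)
qed

text \<open>Just left of \<open>j/n\<close> the discrepancy is \<open>(k - n t)/n\<close> with \<open>n t \<in> (j - 1/4, j)\<close>,
  so a count \<open>k \<noteq> j\<close> forces \<open>|k - n t| > 3/4\<close>.\<close>
lemma abs_local_disc_large_left_of_grid_point:
  assumes n: "n > 0" and j: "1 \<le> j" and count: "count_below n x (real j / real n) \<noteq> j"
  shows "\<exists>l. 0 \<le> l \<and> l < real j / real n \<and>
    (\<forall>t\<in>{l<..<real j / real n}. 3 / (4 * real n) \<le> \<bar>local_disc n x t\<bar>)"
proof -
  let ?u = "real j / real n"
  let ?k = "count_below n x ?u"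
  have a: "0 \<le> ?u - 1 / (4 * real n)" "?u - 1 / (4 * real n) < ?u"
    using n j by (auto simp: field_simps)
  then obtain l where l: "?u - 1 / (4 * real n) \<le> l" "l < ?u"
    and const: "\<forall>t\<in>{l<..?u}. count_below n x t = ?k"
    using count_below_constant_left by blast
  have k: "real ?k \<le> real j - 1 \<or> real j + 1 \<le> real ?k"
    using count by linarith
  have large: "3 / (4 * real n) \<le> \<bar>local_disc n x t\<bar>" if t: "t \<in> {l<..<?u}" for t
  proof -
    have "t \<in> {l<..?u}" using t by simp
    with const have "count_below n x t = ?k" by (rule bspec)
    then have disc: "local_disc n x t = (real ?k - real n * t) / real n"
      using local_disc_eq_count_below[OF n] by simp
    have "real j - 1/4 \<le> real n * l"
      using n l(1) by (simp add: field_simps)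
    moreover have "real n * l < real n * t" "real n * t < real j"
      using n t by (auto simp: field_simps)
    ultimately have "3/4 \<le> \<bar>real ?k - real n * t\<bar>"
      using k by linarith
    then have "(3/4) / real n \<le> \<bar>real ?k - real n * t\<bar> / real n"
      by (rule divide_right_mono) simp
    then show ?thesis
      unfolding disc abs_divide by simp
  qed
  have "0 \<le> l" using a(1) l(1) by (rule order_trans)
  with l(2) large show ?thesis by blast
qed

lemma Lp_disc_strict_mono:
  assumes p: "1 \<le> p" and I: "0 \<le> l" "l < u" "u \<le> 1" and ab: "a < b"
    and le: "\<forall>t\<in>{0..1}. \<bar>local_disc n y t\<bar> \<le> \<bar>local_disc n x t\<bar>"
    and le_a: "\<forall>t\<in>{0..1}. \<bar>local_disc n y t\<bar> \<le> a"
    and ge_b: "\<forall>t\<in>{l<..<u}. b \<le> \<bar>local_disc n x t\<bar>"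
  shows "Lp_disc p n y < Lp_disc p n x"
proof -
  have a: "0 \<le> a" using bspec[OF le_a, of 0] by simp
  show ?thesis
  proof (cases "p = \<infinity>")
    case True
    let ?E = "\<lambda>z. esssup (lebesgue_on {0..1}) (\<lambda>t. ereal \<bar>local_disc n z t\<bar>)"
    have "?E y \<le> ereal a"
      using le_a by (intro esssup_lebesgue_on_le borel_measurable_lebesgue_on_abs_local_disc) simp
    then have "real_of_ereal (?E y) \<le> a"
      using a by (cases "?E y") auto
    moreover have "ereal b \<le> ?E x"
      using I ge_b by (intro esssup_lebesgue_on_ge_on_interval) auto
    moreover have "?E x \<le> ereal 1"
      using abs_local_disc_le_1
      by (intro esssup_lebesgue_on_le borel_measurable_lebesgue_on_abs_local_disc) simp
    ultimately show ?thesis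
      using True ab unfolding Lp_disc_def by (cases "?E x") auto
  next
    case False
    then obtain r where r: "p = ereal r" "1 \<le> r" using p by (cases p) auto
    let ?F = "\<lambda>z t. \<bar>local_disc n z t\<bar> powr r"
    have "(LINT t:{0..1}|lborel. ?F y t) < (LINT t:{0..1}|lborel. ?F x t)"
    proof (rule set_integral_strict_mono_on_interval)
      show "\<forall>t\<in>{0..1}. ?F y t \<le> ?F x t"
        using le r by (auto intro: powr_mono2)
      show "\<forall>t\<in>{l<..<u}. ?F y t + (b powr r - a powr r) \<le> ?F x t"
      proof
        fix t assume t: "t \<in> {l<..<u}"
        then have "?F y t \<le> a powr r" using le_a I r by (intro powr_mono2) auto
        moreover have "b powr r \<le> ?F x t" using ge_b t a ab r by (intro powr_mono2) auto
        ultimately show "?F y t + (b powr r - a powr r) \<le> ?F x t" by simp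
      qed
      show "0 < b powr r - a powr r" using a ab r by (simp add: powr_less_mono2)
    qed (use I r in \<open>auto intro: set_integrable_abs_local_disc_powr\<close>)
    moreover have "0 \<le> (LINT t:{0..1}|lborel. ?F y t)"
      unfolding set_lebesgue_integral_def by (intro Bochner_Integration.integral_nonneg) (simp add: indicator_def)
    ultimately show ?thesis
      using False r unfolding Lp_disc_def by (simp add: powr_less_mono2)
  qed
qed

lemma count_below_grid_point_of_optimal:
  assumes p: "1 \<le> p" and n: "n > 0" and j: "1 \<le> j" "j \<le> n"
    and opt: "\<forall>y. (\<forall>i<n. y i \<in> {0..1}) \<longrightarrow> Lp_disc p n x \<le> Lp_disc p n y"
  shows "count_below n x (real j / real n) = j"
proof (rule ccontr)
  assume "count_below n x (real j / real n) \<noteq> j"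
  then obtain l where l: "0 \<le> l" "l < real j / real n"
    and large: "\<forall>t\<in>{l<..<real j / real n}. 3 / (4 * real n) \<le> \<bar>local_disc n x t\<bar>"
    using abs_local_disc_large_left_of_grid_point[OF n j(1)] by blast
  have "Lp_disc p n (centered_grid n) < Lp_disc p n x"
  proof (rule Lp_disc_strict_mono[OF p l _ _ _ _ large])
    show "real j / real n \<le> 1" "1 / (2 * real n) < 3 / (4 * real n)"
      using n j by (auto simp: field_simps)
  qed (use abs_local_disc_centered_grid_minimal abs_local_disc_centered_grid_le n in auto)
  moreover have "Lp_disc p n x \<le> Lp_disc p n (centered_grid n)"
    using opt centered_grid_in_unit_interval by blast
  ultimately show False by simp
qed

theorem mainTheorem5:
  fixes n :: nat and p :: ereal and x :: "nat \<Rightarrow> real"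
  assumes p: "1 \<le> p"
    and pts: "\<forall>i<n. x i \<in> {0..1}"
    and opt: "\<forall>y :: nat \<Rightarrow> real. (\<forall>i<n. y i \<in> {0..1}) \<longrightarrow> Lp_disc p n x \<le> Lp_disc p n y"
  shows "\<forall>j\<in>{1..n}. card {i\<in>{..<n}. x i \<in> {(real j - 1) / real n ..< real j / real n}} = 1"
proof
  fix j assume j: "j \<in> {1..n}"
  then have n: "n > 0" by simp
  have upper: "count_below n x (real j / real n) = j"
    using count_below_grid_point_of_optimal[OF p n _ _ opt] j by simp
  have lower: "count_below n x ((real j - 1) / real n) = j - 1"
  proof (cases "j = 1")
    case False
    then have "1 \<le> j - 1" "j - 1 \<le> n" using j by auto
    from count_below_grid_point_of_optimal[OF p n this opt]
    show ?thesis using j by (simp add: of_nat_diff)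
  qed (simp add: count_below_def)
  have "0 \<le> (real j - 1) / real n" "(real j - 1) / real n \<le> real j / real n"
    using j by (auto simp: divide_right_mono)
  from card_points_in_interval[OF this, of n x]
  show "card {i\<in>{..<n}. x i \<in> {(real j - 1) / real n ..< real j / real n}} = 1"
    using j by (simp add: upper lower)
qed

end
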